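(* Let $k$ be a non-negative integer. Suppose that $\ell(n)\le 2kn+n-k^2-k$ for every positive integer $n$. Then for every positive integer $n$, every Latin square of order $n$ has a partial transversal of length $n-k$.
   Context: An array of order $n$ is an $n\times n$ array with a symbol in each cell; an entry is a triple $(i,j,A_{ij})$ where $A_{ij}$ is the symbol in cell $(i,j)$. A partial transversal of length $k$ is a set of $k$ entries, no two of which agree in any of their three coordinates (row, column, symbol). A transversal of an $n\times n$ array is a partial transversal of length $n$. An array is Latin if no symbol appears more than once in any row or any column; a Latin square of order $n$ is an $n\times n$ Latin array with exactly $n$ distinct symbols. For each positive integer $n$, $\ell(n)$ denotes the least positive integer such that $\ell(n)\ge n$ and every $n\times n$ Latin array with at least $\ell(n)$ distinct symbols contains a transversal. *)

theory Defs
  imports Main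
begin

text \<open>An array of order n: cells (i,j) with i,j < n; symbols are natural numbers
  (any symbol set can be relabelled injectively into nat).\<close>

definition symbols :: "nat \<Rightarrow> (nat \<Rightarrow> nat \<Rightarrow> nat) \<Rightarrow> nat set" where
  "symbols n A = {A i j | i j. i < n \<and> j < n}"

definition latin_array :: "nat \<Rightarrow> (nat \<Rightarrow> nat \<Rightarrow> nat) \<Rightarrow> bool" where
  "latin_array n A \<longleftrightarrow>
     (\<forall>i<n. inj_on (\<lambda>j. A i j) {..<n}) \<and> (\<forall>j<n. inj_on (\<lambda>i. A i j) {..<n})"

definition latin_square :: "nat \<Rightarrow> (nat \<Rightarrow> nat \<Rightarrow> nat) \<Rightarrow> bool" where
  "latin_square n A \<longleftrightarrow> latin_array n A \<and> card (symbols n A) = n"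

text \<open>A partial transversal of length k, given by its set of cells (the entry of a cell
  (i,j) is the triple (i,j,A i j)); no two entries agree in row, column or symbol.\<close>
definition partial_transversal ::
  "nat \<Rightarrow> (nat \<Rightarrow> nat \<Rightarrow> nat) \<Rightarrow> (nat \<times> nat) set \<Rightarrow> nat \<Rightarrow> bool" where
  "partial_transversal n A T k \<longleftrightarrow>
     T \<subseteq> {..<n} \<times> {..<n} \<and> card T = k \<and>
     inj_on fst T \<and> inj_on snd T \<and> inj_on (\<lambda>(i,j). A i j) T"

definition has_transversal :: "nat \<Rightarrow> (nat \<Rightarrow> nat \<Rightarrow> nat) \<Rightarrow> bool" where
  "has_transversal n A \<longleftrightarrow> (\<exists>T. partial_transversal n A T n)"

definition ell :: "nat \<Rightarrow> nat" where
  "ell n = (LEAST m. m > 0 \<and> m \<ge> n \<and>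
      (\<forall>A. latin_array n A \<and> card (symbols n A) \<ge> m \<longrightarrow> has_transversal n A))"

end

theory Submission
  imports Defs
begin

text \<open>Pad a Latin square A of order n to an array of order m = n + k by filling every new
  cell with its own fresh symbol. The result is a Latin array with n + 2kn + k^2 symbols,
  which is exactly the assumed bound on \<open>ell m\<close>, so it has a transversal. At most k of its
  entries lie in the new rows and at most k in the new columns; the remaining n - k entries
  form a partial transversal of A.\<close>

lemma symbols_eq_image: "symbols n A = (\<lambda>(i, j). A i j) ` ({..<n} \<times> {..<n})"
  unfolding symbols_def by auto

lemma finite_symbols: "finite (symbols n A)"
  unfolding symbols_eq_image by simp

lemma card_symbols_le: "card (symbols n A) \<le> n * n"
  using card_image_le[of "{..<n} \<times> {..<n}" "\<lambda>(i, j). A i j"]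
  by (simp add: symbols_eq_image)

lemma has_transversal_if_ell_le:
  assumes "latin_array n A" and "ell n \<le> card (symbols n A)"
  shows "has_transversal n A"
proof -
  let ?P = "\<lambda>m. m > 0 \<and> m \<ge> n \<and>
      (\<forall>A. latin_array n A \<and> card (symbols n A) \<ge> m \<longrightarrow> has_transversal n A)"
  \<comment> \<open>n * n + 1 qualifies vacuously, so the \<open>LEAST\<close> in \<open>ell\<close> is attained.\<close>
  have "?P (n * n + 1)"
  proof (intro conjI allI impI)
    fix A' assume "latin_array n A' \<and> n * n + 1 \<le> card (symbols n A')"
    with card_symbols_le[of n A'] show "has_transversal n A'" by simp
  qed (auto simp: le_square le_SucI)
  then have "?P (ell n)"
    unfolding ell_def by (rule LeastI)
  with assms show ?thesis by blast
qed

definition pad_array :: "nat \<Rightarrow> nat \<Rightarrow> (nat \<Rightarrow> nat \<Rightarrow> nat) \<Rightarrow> nat \<Rightarrow> nat \<Rightarrow> nat" where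
  "pad_array n m A i j =
     (if i < n \<and> j < n then A i j else Suc (Max (symbols n A)) + i * m + j)"

lemma mult_add_eq_mult_add_iff:
  fixes i j i' j' m :: nat
  assumes "j < m" and "j' < m"
  shows "i * m + j = i' * m + j' \<longleftrightarrow> i = i' \<and> j = j'"
proof
  assume eq: "i * m + j = i' * m + j'"
  have "i = (i * m + j) div m" "j = (i * m + j) mod m"
    using assms by auto
  moreover have "i' = (i' * m + j') div m" "j' = (i' * m + j') mod m"
    using assms by auto
  ultimately show "i = i' \<and> j = j'"
    by (metis eq)
qed simp

lemma pad_array_eq_cases:
  assumes eq: "pad_array n m A i j = pad_array n m A i' j'" and "j < m" "j' < m"
  shows "(i < n \<and> j < n \<and> i' < n \<and> j' < n \<and> A i j = A i' j') \<or> (i = i' \<and> j = j')"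
proof -
  let ?F = "Suc (Max (symbols n A))"
  have old: "pad_array n m A a b = A a b" "A a b < ?F" if "a < n" "b < n" for a b
  proof -
    have "A a b \<in> symbols n A"
      using that by (auto simp: symbols_def)
    then show "A a b < ?F"
      using Max_ge[OF finite_symbols] by (simp add: le_imp_less_Suc)
  qed (simp add: pad_array_def that)
  have new: "pad_array n m A a b = ?F + (a * m + b)" if "\<not> (a < n \<and> b < n)" for a b
    using that by (auto simp: pad_array_def)
  consider "i < n \<and> j < n" "i' < n \<and> j' < n"
    | "i < n \<and> j < n" "\<not> (i' < n \<and> j' < n)"
    | "\<not> (i < n \<and> j < n)" "i' < n \<and> j' < n"
    | "\<not> (i < n \<and> j < n)" "\<not> (i' < n \<and> j' < n)"
    by blast
  then show ?thesis
  proof cases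
    case 4
    with eq have "i * m + j = i' * m + j'"
      by (simp add: new)
    then show ?thesis
      using mult_add_eq_mult_add_iff[OF assms(2,3)] by blast
  qed (use eq old new in \<open>fastforce+\<close>)
qed

lemma latin_array_pad_array:
  assumes "latin_array n A"
  shows "latin_array m (pad_array n m A)"
  unfolding latin_array_def
proof (intro conjI allI impI inj_onI)
  fix i j j' assume "i < m" "j \<in> {..<m}" "j' \<in> {..<m}"
    and "pad_array n m A i j = pad_array n m A i j'"
  then show "j = j'"
    using pad_array_eq_cases[of n m A i j i j'] assms
    unfolding latin_array_def by (auto dest: inj_onD)
next
  fix j i i' assume "j < m" "i \<in> {..<m}" "i' \<in> {..<m}"
    and "pad_array n m A i j = pad_array n m A i' j"
  then show "i = i'"
    using pad_array_eq_cases[of n m A i j i' j] assms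
    unfolding latin_array_def by (auto dest: inj_onD)
qed

lemma card_symbols_pad_array:
  assumes "n \<le> m"
  shows "card (symbols m (pad_array n m A)) = card (symbols n A) + (m * m - n * n)"
proof -
  define B where "B = pad_array n m A"
  define D where "D = {..<m} \<times> {..<m} - {..<n} \<times> {..<n}"
  let ?entry = "\<lambda>(i, j). B i j"
  have block: "{..<n} \<times> {..<n} \<subseteq> {..<m} \<times> {..<m}"
    using assms by auto
  have old: "symbols n A = ?entry ` ({..<n} \<times> {..<n})"
    by (force simp: symbols_def B_def pad_array_def)
  have new_entry_unique: "p = q"
    if "p \<in> {..<m} \<times> {..<m}" "q \<in> D" "?entry p = ?entry q" for p q
    using that pad_array_eq_cases[of n m A "fst p" "snd p" "fst q" "snd q"]
    by (auto simp: D_def B_def split: prod.splits)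
  have "symbols m B = symbols n A \<union> ?entry ` D"
    unfolding old symbols_eq_image[of m B] D_def image_Un[symmetric] Un_Diff_cancel
    using block by (simp add: Un_absorb1)
  moreover have "symbols n A \<inter> ?entry ` D = {}"
  proof (rule equals0I)
    fix x assume "x \<in> symbols n A \<inter> ?entry ` D"
    then obtain p q where p: "p \<in> {..<n} \<times> {..<n}" and q: "q \<in> D"
      and "?entry p = ?entry q"
      unfolding old by blast
    then have "p = q"
      using new_entry_unique block by blast
    with p q show False
      by (simp add: D_def)
  qed
  moreover have "card (?entry ` D) = m * m - n * n"
  proof -
    have "inj_on ?entry D"
    proof (rule inj_onI)
      fix p q assume "p \<in> D" "q \<in> D" "?entry p = ?entry q"
      then show "p = q"
        using new_entry_unique[of p q] by (simp add: D_def)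
    qed
    then have "card (?entry ` D) = card D"
      by (rule card_image)
    also have "\<dots> = m * m - n * n"
      using block by (simp add: D_def card_Diff_subset card_cartesian_product)
    finally show ?thesis .
  qed
  moreover have "finite (?entry ` D)"
    by (simp add: D_def)
  ultimately show ?thesis
    unfolding B_def by (simp add: card_Un_disjoint finite_symbols)
qed

lemma card_symbols_pad_latin_square:
  assumes "latin_square n A"
  shows "card (symbols (n + k) (pad_array n (n + k) A)) = n + (2 * k * n + k * k)"
proof -
  have "(n + k) * (n + k) = n * n + (2 * k * n + k * k)"
    by (simp add: algebra_simps)
  then show ?thesis
    using assms card_symbols_pad_array[of n "n + k" A]
    unfolding latin_square_def by simp
qed

lemma partial_transversal_subset:
  assumes "partial_transversal n A T k" and "T' \<subseteq> T"
  shows "partial_transversal n A T' (card T')"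
  using assms unfolding partial_transversal_def by (auto intro: inj_on_subset)

lemma partial_transversal_shorten:
  assumes "partial_transversal n A T k" and "l \<le> k"
  shows "\<exists>T'. partial_transversal n A T' l"
proof -
  obtain T' where "T' \<subseteq> T" "card T' = l"
    using assms obtain_subset_with_card_n unfolding partial_transversal_def by metis
  with partial_transversal_subset[OF assms(1)] show ?thesis by metis
qed

lemma card_partial_transversal_fst_ge:
  assumes "partial_transversal m B T k"
  shows "card {p \<in> T. n \<le> fst p} \<le> m - n"
proof -
  have "card {p \<in> T. n \<le> fst p} \<le> card {n..<m}"
    using assms unfolding partial_transversal_def
    by (intro card_inj_on_le[where f = fst]) (auto intro: inj_on_subset)
  then show ?thesis by simp
qed

lemma card_partial_transversal_snd_ge:
  assumes "partial_transversal m B T k"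
  shows "card {p \<in> T. n \<le> snd p} \<le> m - n"
proof -
  have "card {p \<in> T. n \<le> snd p} \<le> card {n..<m}"
    using assms unfolding partial_transversal_def
    by (intro card_inj_on_le[where f = snd]) (auto intro: inj_on_subset)
  then show ?thesis by simp
qed

lemma partial_transversal_restrict:
  assumes T: "partial_transversal m B T k" and agree: "\<forall>i<n. \<forall>j<n. B i j = A i j"
  defines "T' \<equiv> T \<inter> {..<n} \<times> {..<n}"
  shows "partial_transversal n A T' (card T')"
proof -
  have "inj_on (\<lambda>(i, j). B i j) T'"
    using T inj_on_subset unfolding partial_transversal_def T'_def by blast
  moreover have "(\<lambda>(i, j). B i j) p = (\<lambda>(i, j). A i j) p" if "p \<in> T'" for p
    using that agree by (auto simp: T'_def)
  ultimately have "inj_on (\<lambda>(i, j). A i j) T'"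
    using inj_on_cong by metis
  then show ?thesis
    using T inj_on_subset unfolding partial_transversal_def T'_def by blast
qed

lemma partial_transversal_of_extension:
  assumes T: "partial_transversal (n + k) B T (n + k)"
    and agree: "\<forall>i<n. \<forall>j<n. B i j = A i j"
  shows "\<exists>T'. partial_transversal n A T' (n - k)"
proof -
  define T' where "T' = T \<inter> {..<n} \<times> {..<n}"
  define R where "R = {p \<in> T. n \<le> fst p}"
  define C where "C = {p \<in> T. n \<le> snd p}"
  have "finite T"
    using T finite_subset unfolding partial_transversal_def by blast
  then have "card T \<le> card (T' \<union> R \<union> C)"
    by (intro card_mono) (auto simp: T'_def R_def C_def)
  also have "\<dots> \<le> card T' + card R + card C"
    using card_Un_le[of "T' \<union> R" C] card_Un_le[of T' R] by linarith
  finally have "n - k \<le> card T'"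
    using T card_partial_transversal_fst_ge[OF T, of n]
      card_partial_transversal_snd_ge[OF T, of n]
    unfolding partial_transversal_def R_def C_def by linarith
  then show ?thesis
    using partial_transversal_shorten[OF partial_transversal_restrict[OF T agree]]
    unfolding T'_def by blast
qed

theorem proposition1:
  fixes k :: nat
  assumes "\<forall>n::nat. n > 0 \<longrightarrow>
             int (ell n) \<le> 2 * int k * int n + int n - int k ^ 2 - int k"
  shows "\<forall>n::nat. n > 0 \<longrightarrow>
           (\<forall>A. latin_square n A \<longrightarrow> (\<exists>T. partial_transversal n A T (n - k)))"
proof (intro allI impI)
  fix n :: nat and A
  assume "n > 0" and square: "latin_square n A"
  define B where "B = pad_array n (n + k) A"
  from \<open>n > 0\<close> have "n + k > 0"
    by simp
  then have "int (ell (n + k)) \<le> 2 * int k * int (n + k) + int (n + k) - int k ^ 2 - int k"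
    by (rule assms[rule_format])
  also have "\<dots> = int (n + (2 * k * n + k * k))"
    by (simp add: algebra_simps power2_eq_square)
  finally have "ell (n + k) \<le> card (symbols (n + k) B)"
    unfolding B_def card_symbols_pad_latin_square[OF square] by (simp only: of_nat_le_iff)
  then have "has_transversal (n + k) B"
    using has_transversal_if_ell_le latin_array_pad_array square
    unfolding B_def latin_square_def by blast
  then obtain T where "partial_transversal (n + k) B T (n + k)"
    unfolding has_transversal_def by blast
  moreover have "\<forall>i<n. \<forall>j<n. B i j = A i j"
    by (simp add: B_def pad_array_def)
  ultimately show "\<exists>T. partial_transversal n A T (n - k)"
    by (rule partial_transversal_of_extension)
qed

end
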